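(* Let $X$ be a Hausdorff hereditarily disconnected space. If $\mathcal{C}\subset\mathcal{K}(X)$ is a connected set with more than one point and $K\in\mathcal{C}$, then there is a closed subset $F\subset X$ with $K\subsetneq F$ such that the set $\mathcal{D}=\{K\cup\{x\}:x\in F\}$ is a connected subset of $\mathcal{K}(X)$ and $|\mathcal{D}|>1$.
   Context: $\mathcal{K}(X)$ is the set of nonempty compact subsets of $X$ with the Vietoris topology (generated by $U^+=\{A: A\subset U\}$ and $U^-=\{A: A\cap U\neq\emptyset\}$ for $U$ open in $X$). A space is hereditarily disconnected if every nonempty connected subset is a singleton. *)

theory Defs
  imports "HOL-Analysis.Analysis"
begin

definition hyperspace_K :: "'a topology \<Rightarrow> 'a set set" where
  "hyperspace_K X = {A. A \<noteq> {} \<and> compactin X A}"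

definition vietoris :: "'a topology \<Rightarrow> 'a set topology" where
  "vietoris X = topology_generated_by
     ({{A \<in> hyperspace_K X. A \<subseteq> U} | U. openin X U} \<union>
      {{A \<in> hyperspace_K X. A \<inter> U \<noteq> {}} | U. openin X U})"

definition hereditarily_disconnected :: "'a topology \<Rightarrow> bool" where
  "hereditarily_disconnected X \<longleftrightarrow>
     (\<forall>S. connectedin X S \<and> S \<noteq> {} \<longrightarrow> (\<exists>x. S = {x}))"

end

(*
  If every member of a connected family C in K(X) lies in a set S, then a subset P that is clopen
  in S contains either all members of C or none: otherwise the Vietoris-open sets "contained in U"
  and "meeting V", for open U and V cutting out P and S - P, would disconnect C.

  In a compact Hausdorff hereditarily disconnected K the components are points, so a point of K
  is separated from any compact subset not containing it by a clopen subset of K. Hence a connected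
  family whose members all lie in K is a singleton, and some member of C leaves K; therefore
  K is a proper subset of F, the closure of the union of C.

  The map x |-> K u {x} is continuous and sends every point of K to K. A clopen subset of the image
  of F that contains K pulls back to a clopen subset of F containing K, which by the first
  observation contains the union of C and therefore its closure F. So the image is connected.
*)
theory Submission
  imports Defs
begin

lemma topspace_vietoris: "topspace (vietoris X) = hyperspace_K X"
proof -
  let ?upper = "{{A \<in> hyperspace_K X. A \<subseteq> U} | U. openin X U}"
  let ?lower = "{{A \<in> hyperspace_K X. A \<inter> U \<noteq> {}} | U. openin X U}"
  have "{A \<in> hyperspace_K X. A \<subseteq> topspace X} = hyperspace_K X"
    by (auto simp: hyperspace_K_def dest: compactin_subset_topspace)
  then have "hyperspace_K X \<in> ?upper"
    by (intro CollectI exI[of _ "topspace X"]) simp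
  moreover have "\<Union>(?upper \<union> ?lower) \<subseteq> hyperspace_K X"
    by (rule Union_least) blast
  ultimately have "\<Union>(?upper \<union> ?lower) = hyperspace_K X"
    by (meson Union_upper UnI1 subset_antisym)
  then show ?thesis
    unfolding vietoris_def topology_generated_by_topspace .
qed

lemma openin_vietoris_upper: "openin X U \<Longrightarrow> openin (vietoris X) {A \<in> hyperspace_K X. A \<subseteq> U}"
  unfolding vietoris_def by (rule topology_generated_by_Basis) blast

lemma openin_vietoris_lower:
  "openin X U \<Longrightarrow> openin (vietoris X) {A \<in> hyperspace_K X. A \<inter> U \<noteq> {}}"
  unfolding vietoris_def by (rule topology_generated_by_Basis) blast

lemma Union_hyperspace_K_subset_topspace: "\<C> \<subseteq> hyperspace_K X \<Longrightarrow> \<Union>\<C> \<subseteq> topspace X"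
  by (auto simp: hyperspace_K_def dest: compactin_subset_topspace)

lemma Un_singleton_in_hyperspace_K:
  "K \<in> hyperspace_K X \<Longrightarrow> x \<in> topspace X \<Longrightarrow> K \<union> {x} \<in> hyperspace_K X"
  using compactin_Un[of X K "{x}"] by (simp add: hyperspace_K_def)

lemma continuous_map_Un_singleton_vietoris:
  assumes "K \<in> hyperspace_K X"
  shows "continuous_map X (vietoris X) (\<lambda>x. K \<union> {x})"
  unfolding vietoris_def
proof (rule continuous_on_generated_topo)
  fix W assume "W \<in> {{A \<in> hyperspace_K X. A \<subseteq> U} |U. openin X U} \<union>
       {{A \<in> hyperspace_K X. A \<inter> U \<noteq> {}} |U. openin X U}"
  then consider U where "openin X U" "W = {A \<in> hyperspace_K X. A \<subseteq> U}"
    | U where "openin X U" "W = {A \<in> hyperspace_K X. A \<inter> U \<noteq> {}}" by blast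
  then show "openin X ((\<lambda>x. K \<union> {x}) -` W \<inter> topspace X)"
  proof cases
    case 1
    then have "(\<lambda>x. K \<union> {x}) -` W \<inter> topspace X = (if K \<subseteq> U then U else {})"
      using Un_singleton_in_hyperspace_K[OF assms] openin_subset by auto
    then show ?thesis using 1 by simp
  next
    case 2
    then have "(\<lambda>x. K \<union> {x}) -` W \<inter> topspace X = (if K \<inter> U \<noteq> {} then topspace X else U)"
      using Un_singleton_in_hyperspace_K[OF assms] openin_subset by auto
    then show ?thesis using 2 by simp
  qed
qed (use Un_singleton_in_hyperspace_K[OF assms] in blast)

lemma connectedin_vietoris_members_clopen:
  assumes conn: "connectedin (vietoris X) \<C>" and hyp: "\<C> \<subseteq> hyperspace_K X" and "\<Union>\<C> \<subseteq> S"
    and P: "openin (subtopology X S) P" "closedin (subtopology X S) P"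
    and "B \<in> \<C>" "B \<subseteq> P" "A \<in> \<C>"
  shows "A \<subseteq> P"
proof -
  obtain U where U: "openin X U" "P = U \<inter> S"
    using P(1) by (auto simp: openin_subtopology)
  obtain V where V: "openin X V" "topspace X \<inter> S - P = V \<inter> S"
    using P(2) by (auto simp: closedin_def openin_subtopology)
  have "P \<subseteq> topspace X \<inter> S"
    using openin_subset[OF P(1)] by simp
  moreover have "\<Union>\<C> \<subseteq> topspace X"
    using hyp by (rule Union_hyperspace_K_subset_topspace)
  ultimately have in_P_iff: "M \<subseteq> P \<longleftrightarrow> M \<inter> V = {}" if "M \<in> \<C>" for M
    using that V(2) \<open>\<Union>\<C> \<subseteq> S\<close> by blast
  define E1 where "E1 = {M \<in> hyperspace_K X. M \<subseteq> U}"
  define E2 where "E2 = {M \<in> hyperspace_K X. M \<inter> V \<noteq> {}}"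
  have "\<C> \<subseteq> E1 \<union> E2"
    using hyp in_P_iff U(2) by (auto simp: E1_def E2_def)
  moreover have "E1 \<inter> E2 \<inter> \<C> = {}"
    using in_P_iff U(2) \<open>\<Union>\<C> \<subseteq> S\<close> unfolding E1_def E2_def by blast
  moreover have "E1 \<inter> \<C> \<noteq> {}"
    using hyp \<open>B \<in> \<C>\<close> \<open>B \<subseteq> P\<close> U(2) by (auto simp: E1_def)
  moreover have "openin (vietoris X) E1" "openin (vietoris X) E2"
    unfolding E1_def E2_def using U(1) V(1) by (simp_all add: openin_vietoris_upper openin_vietoris_lower)
  ultimately have "E2 \<inter> \<C> = {}"
    by (meson connectedinD[OF conn])
  then show ?thesis
    using in_P_iff \<open>A \<in> \<C>\<close> hyp by (auto simp: E2_def)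
qed

lemma hereditarily_disconnected_separated_between_point:
  assumes "Hausdorff_space X" "hereditarily_disconnected X" "compactin X K"
    and "x \<in> K" "compactin X B" "B \<subseteq> K" "x \<notin> B"
  shows "separated_between (subtopology X K) {x} B"
proof -
  define Y where "Y = subtopology X K"
  have x: "x \<in> topspace Y"
    using assms(3,4) compactin_subset_topspace by (fastforce simp: Y_def)
  have "connectedin X (connected_component_of_set Y x)"
    using connectedin_connected_component_of[of Y x] by (simp add: Y_def connectedin_subtopology)
  moreover have "x \<in> connected_component_of_set Y x"
    using x by (simp add: connected_component_of_refl)
  ultimately have "connected_component_of_set Y x = {x}"
    using assms(2) unfolding hereditarily_disconnected_def by (metis empty_iff singletonD)
  then have "{x} \<in> connected_components_of Y"
    using connected_component_in_connected_components_of[of Y x] x by simp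
  moreover have "locally_compact_space Y" "Hausdorff_space Y"
    using assms(1,3) by (simp_all add: Y_def compact_imp_locally_compact_space
        compact_space_subtopology Hausdorff_space_subtopology)
  moreover have "closedin Y B"
    using assms(5,6) \<open>Hausdorff_space Y\<close> by (simp add: Y_def compactin_imp_closedin compactin_subtopology)
  ultimately show ?thesis
    using separated_between_compact_connected_component[of Y "{x}" B] x assms(7)
    by (simp add: Y_def)
qed

lemma connectedin_vietoris_within_compact_eq:
  assumes "Hausdorff_space X" "hereditarily_disconnected X" "compactin X K"
    and conn: "connectedin (vietoris X) \<C>" and hyp: "\<C> \<subseteq> hyperspace_K X" and "\<Union>\<C> \<subseteq> K"
    and "A \<in> \<C>" "B \<in> \<C>"
  shows "A = B"
proof -
  have "A \<subseteq> B" if "A \<in> \<C>" "B \<in> \<C>" for A B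
  proof
    fix x assume "x \<in> A"
    show "x \<in> B"
    proof (rule ccontr)
      assume "x \<notin> B"
      have "compactin X B"
        using hyp \<open>B \<in> \<C>\<close> by (auto simp: hyperspace_K_def)
      then have "separated_between (subtopology X K) {x} B"
        using hereditarily_disconnected_separated_between_point[OF assms(1-3)] \<open>x \<notin> B\<close>
          \<open>x \<in> A\<close> that \<open>\<Union>\<C> \<subseteq> K\<close> by blast
      then obtain P where P: "closedin (subtopology X K) P" "openin (subtopology X K) P"
        "x \<in> P" "B \<subseteq> topspace (subtopology X K) - P"
        by (auto simp: separated_between)
      have "A \<subseteq> topspace (subtopology X K) - P"
        using connectedin_vietoris_members_clopen[OF conn hyp \<open>\<Union>\<C> \<subseteq> K\<close>
            openin_diff[OF openin_topspace P(1)] closedin_diff[OF closedin_topspace P(2)]] P(4) that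
        by blast
      then show False
        using \<open>x \<in> A\<close> \<open>x \<in> P\<close> by blast
    qed
  qed
  then show ?thesis
    using assms(7,8) by blast
qed

lemma connectedin_vietoris_adjoin_closure:
  assumes conn: "connectedin (vietoris X) \<C>" and hyp: "\<C> \<subseteq> hyperspace_K X" and "K \<in> \<C>"
  shows "connectedin (vietoris X) ((\<lambda>x. K \<union> {x}) ` (X closure_of \<Union>\<C>))"
proof -
  define f where "f = (\<lambda>x. K \<union> {x})"
  define F where "F = X closure_of \<Union>\<C>"
  define Y where "Y = subtopology (vietoris X) (f ` F)"
  have K: "K \<in> hyperspace_K X"
    using hyp \<open>K \<in> \<C>\<close> by blast
  have "F \<subseteq> topspace X" "closedin X F"
    by (simp_all add: F_def closure_of_subset_topspace)
  have "\<Union>\<C> \<subseteq> F"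
    unfolding F_def by (rule closure_of_subset[OF Union_hyperspace_K_subset_topspace[OF hyp]])
  have fF: "f ` F \<subseteq> topspace (vietoris X)"
    using Un_singleton_in_hyperspace_K[OF K] \<open>F \<subseteq> topspace X\<close> by (auto simp: topspace_vietoris f_def)
  then have topY: "topspace Y = f ` F"
    by (auto simp: Y_def)
  have cont: "continuous_map (subtopology X F) Y f"
    unfolding Y_def f_def
    by (intro continuous_map_into_subtopology continuous_map_from_subtopology
        continuous_map_Un_singleton_vietoris[OF K]) auto
  have "K \<in> f ` F"
  proof -
    obtain k where "k \<in> K"
      using K by (auto simp: hyperspace_K_def)
    then have "f k = K" "k \<in> F"
      using \<open>K \<in> \<C>\<close> \<open>\<Union>\<C> \<subseteq> F\<close> by (auto simp: f_def)
    then show ?thesis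
      by (metis imageI)
  qed
  have clopen_covers: "f ` F \<subseteq> T" if "openin Y T" "closedin Y T" "K \<in> T" for T
  proof -
    define P where "P = {x \<in> topspace (subtopology X F). f x \<in> T}"
    have P: "openin (subtopology X F) P" "closedin (subtopology X F) P"
      unfolding P_def
      by (rule openin_continuous_map_preimage[OF cont that(1)],
          rule closedin_continuous_map_preimage[OF cont that(2)])
    have "K \<subseteq> P"
      using \<open>K \<in> T\<close> \<open>K \<in> \<C>\<close> \<open>\<Union>\<C> \<subseteq> F\<close> \<open>F \<subseteq> topspace X\<close>
      by (auto simp: P_def f_def insert_absorb)
    then have "\<Union>\<C> \<subseteq> P"
      using connectedin_vietoris_members_clopen[OF conn hyp \<open>\<Union>\<C> \<subseteq> F\<close> P \<open>K \<in> \<C>\<close>] by blast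
    moreover have "closedin X P"
      using closedin_trans_full[OF P(2) \<open>closedin X F\<close>] .
    ultimately have "F \<subseteq> P"
      unfolding F_def by (rule closure_of_minimal)
    then show ?thesis
      by (auto simp: P_def)
  qed
  have "connected_space Y"
    unfolding connected_space_clopen_in
  proof (intro allI impI)
    fix T assume T: "openin Y T \<and> closedin Y T"
    show "T = {} \<or> T = topspace Y"
    proof (cases "K \<in> T")
      case True
      then have "T = topspace Y"
        using clopen_covers[of T] T openin_subset[of Y T] topY by auto
      then show ?thesis ..
    next
      case False
      have "openin Y (topspace Y - T)" "closedin Y (topspace Y - T)"
        using T by (simp_all add: openin_diff closedin_diff)
      moreover have "K \<in> topspace Y - T"
        using False \<open>K \<in> f ` F\<close> topY by simp
      ultimately have "f ` F \<subseteq> topspace Y - T"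
        by (rule clopen_covers)
      moreover have "T \<subseteq> f ` F"
        using T openin_subset[of Y T] topY by simp
      ultimately have "T = {}"
        by blast
      then show ?thesis ..
    qed
  qed
  then show ?thesis
    using fF unfolding connectedin_def Y_def f_def F_def by simp
qed

theorem proposition5p7:
  fixes X :: "'a topology" and \<C> :: "'a set set" and K :: "'a set"
  assumes "Hausdorff_space X"
    and "hereditarily_disconnected X"
    and "\<C> \<subseteq> hyperspace_K X"
    and "connectedin (vietoris X) \<C>"
    and "\<exists>A\<in>\<C>. \<exists>B\<in>\<C>. A \<noteq> B"
    and "K \<in> \<C>"
  shows "\<exists>F. closedin X F \<and> K \<subset> F \<and>
           connectedin (vietoris X) ((\<lambda>x. K \<union> {x}) ` F) \<and>
           (\<exists>A\<in>(\<lambda>x. K \<union> {x}) ` F. \<exists>B\<in>(\<lambda>x. K \<union> {x}) ` F. A \<noteq> B)"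
proof -
  have K: "K \<noteq> {}" "compactin X K"
    using assms(3,6) by (auto simp: hyperspace_K_def)
  have "\<not> \<Union>\<C> \<subseteq> K"
    using connectedin_vietoris_within_compact_eq[OF assms(1,2) K(2) assms(4,3)] assms(5) by blast
  then obtain a where a: "a \<in> \<Union>\<C>" "a \<notin> K"
    by blast
  obtain k where "k \<in> K"
    using K(1) by blast
  define F where "F = X closure_of \<Union>\<C>"
  have "\<Union>\<C> \<subseteq> F"
    unfolding F_def by (rule closure_of_subset[OF Union_hyperspace_K_subset_topspace[OF assms(3)]])
  show ?thesis
  proof (intro exI conjI)
    show "closedin X F"
      by (simp add: F_def)
    show "K \<subset> F"
      using \<open>\<Union>\<C> \<subseteq> F\<close> assms(6) a by blast
    show "connectedin (vietoris X) ((\<lambda>x. K \<union> {x}) ` F)"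
      unfolding F_def by (rule connectedin_vietoris_adjoin_closure[OF assms(4,3,6)])
    show "\<exists>A\<in>(\<lambda>x. K \<union> {x}) ` F. \<exists>B\<in>(\<lambda>x. K \<union> {x}) ` F. A \<noteq> B"
      using \<open>k \<in> K\<close> a \<open>\<Union>\<C> \<subseteq> F\<close> assms(6) by blast
  qed
qed

end
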